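(* Let $k$ be a complex number with $\Re(k)>0$. Then, as the integer $n\to\infty$, $$\int_{0}^{1}(1-u)^k\left(1-\cos 2\pi n u\right)\cot(\pi u)\,du=\frac{\gamma+\log n}{\pi}-\int_{0}^{1}(u^k-u)\cot(\pi u)\,du+o(1).$$
   Context: $\gamma$ is the Euler–Mascheroni constant. *)

theory Defs
  imports "HOL-Analysis.Analysis"
begin

end

theory Submission
  imports Defs "HOL-Complex_Analysis.Complex_Analysis"
begin

text \<open>Substitute \<open>u \<mapsto> 1 - u\<close> and write \<open>v powr k = (v powr k - v) + v\<close>.
  The part with the factor \<open>v\<close> is computed exactly: the kernel
  \<open>(1 - cos (2 \<pi> n v)) cot (\<pi> v)\<close> telescopes in \<open>n\<close> into sums of sines, giving
  \<open>\<integral> v (1 - cos (2 \<pi> n v)) cot (\<pi> v) = (1/(2n) - H\<^sub>n) / \<pi>\<close>, and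
  \<open>H\<^sub>n = \<gamma> + ln n + o(1)\<close>. The remaining weight \<open>(v powr k - v) cot (\<pi> v)\<close> is
  integrable (it is \<open>O(v powr (Re k - 1))\<close> at \<open>0\<close> and bounded at \<open>1\<close>) and smooth inside,
  so its cosine coefficients tend to \<open>0\<close> by the Riemann-Lebesgue lemma.\<close>

definition cot_kernel :: "nat \<Rightarrow> real \<Rightarrow> real" where
  "cot_kernel n v = (1 - cos (2 * pi * real n * v)) * cot (pi * v)"

lemma cot_kernel_Suc:
  assumes "sin (pi * v) \<noteq> 0"
  shows "cot_kernel (Suc n) v
           = cot_kernel n v + sin (2 * pi * real n * v) + sin (2 * pi * real (Suc n) * v)"
proof -
  define a where "a = 2 * pi * real n * v"
  define x where "x = pi * v"
  have "(1 - cos (a + 2*x)) * cos x - (1 - cos a) * cos x = (sin a + sin (a + 2*x)) * sin x"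
    unfolding cos_add sin_add sin_double cos_double
    using sin_cos_squared_add[of x] by algebra
  moreover have "2 * pi * real (Suc n) * v = a + 2*x"
    by (simp add: a_def x_def algebra_simps)
  ultimately show ?thesis
    using assms unfolding cot_kernel_def cot_def a_def [symmetric] x_def [symmetric]
    by (simp add: field_simps)
qed

lemma sin_cos_2pi_nat: "sin (2 * pi * real m) = 0" "cos (2 * pi * real m) = 1"
  using sin_npi[of "2 * m"] cos_npi[of "2 * m"] by (simp_all add: mult.commute mult.left_commute)

text \<open>For \<open>m = 0\<close> both sides vanish, thanks to \<open>x / 0 = 0\<close>.\<close>
lemma has_integral_mult_sin_2pi_nat:
  "((\<lambda>v. v * sin (2 * pi * real m * v)) has_integral - 1 / (2 * pi * real m)) {0..1}"
proof (cases "m = 0")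
  case False
  define c where "c = 2 * pi * real m"
  have c: "c > 0" using False by (simp add: c_def)
  define F where "F v = - v * cos (c * v) / c + sin (c * v) / c^2" for v
  have "((\<lambda>v. v * sin (c * v)) has_integral (F 1 - F 0)) {0..1}"
  proof (rule fundamental_theorem_of_calculus)
    fix v :: real
    show "(F has_vector_derivative v * sin (c * v)) (at v within {0..1})"
      unfolding F_def using c
      by (auto intro!: derivative_eq_intros simp flip: has_real_derivative_iff_has_vector_derivative
               simp: field_simps power2_eq_square)
  qed simp
  moreover have "sin c = 0" "cos c = 1"
    unfolding c_def by (rule sin_cos_2pi_nat)+
  ultimately show ?thesis by (simp add: F_def c_def)
qed simp

lemma has_integral_mult_cot_kernel:
  "((\<lambda>v. v * cot_kernel n v) has_integral (inverse (2 * real n) - harm n) / pi) {0<..<1}"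
proof (induction n)
  case 0
  then show ?case by (simp add: cot_kernel_def harm_def)
next
  case (Suc n)
  have sin_int: "((\<lambda>v. v * sin (2 * pi * real m * v)) has_integral - 1 / (2 * pi * real m)) {0<..<1}" for m
    using has_integral_mult_sin_2pi_nat by (simp add: has_integral_Icc_iff_Ioo)
  have step: "((\<lambda>v. v * cot_kernel n v + v * sin (2 * pi * real n * v) + v * sin (2 * pi * real (Suc n) * v))
          has_integral (inverse (2 * real n) - harm n) / pi - 1 / (2 * pi * real n) - 1 / (2 * pi * real (Suc n)))
         {0<..<1}"
    using has_integral_add[OF has_integral_add[OF Suc sin_int[of n]] sin_int[of "Suc n"]] by simp
  have total: "(inverse (2 * real n) - harm n) / pi - 1 / (2 * pi * real n) - 1 / (2 * pi * real (Suc n))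
      = (inverse (2 * real (Suc n)) - harm (Suc n)) / pi"
    using pi_gt_zero by (cases "n = 0")
      (simp_all add: harm_Suc inverse_eq_divide divide_simps, simp_all add: algebra_simps)
  have integrand: "v * cot_kernel (Suc n) v
      = v * cot_kernel n v + v * sin (2 * pi * real n * v) + v * sin (2 * pi * real (Suc n) * v)"
    if "v \<in> {0<..<1}" for v
    using that cot_kernel_Suc[of v n] sin_gt_zero[of "pi * v"] by (simp add: algebra_simps)
  show ?case
    using step unfolding total by (subst has_integral_cong[OF integrand])
qed

lemma cot_kernel_reflect: "cot_kernel n (1 - v) = - cot_kernel n v"
proof -
  have "cos (2 * pi * real n * (1 - v)) = cos (2 * pi * real n * v)"
    using cos_diff[of "2 * pi * real n" "2 * pi * real n * v"]
    by (simp add: right_diff_distrib sin_cos_2pi_nat)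
  moreover have "cot (pi * (1 - v)) = - cot (pi * v)"
    by (simp add: cot_def right_diff_distrib)
  ultimately show ?thesis by (simp add: cot_kernel_def)
qed

lemma norm_integral_mult_cos_le:
  fixes h h' :: "real \<Rightarrow> complex"
  assumes "a \<le> b"
    and h': "\<And>v. v \<in> {a..b} \<Longrightarrow> (h has_vector_derivative h' v) (at v within {a..b})"
    and cont: "continuous_on {a..b} h'"
  obtains M where "\<And>t. t > 0 \<Longrightarrow> norm (integral {a..b} (\<lambda>v. h v * of_real (cos (t * v)))) \<le> M / t"
proof -
  have "continuous_on {a..b} (\<lambda>v. norm (h v) + norm (h' v))"
    using continuous_on_vector_derivative[OF h'] cont by (intro continuous_intros)
  then have "bounded ((\<lambda>v. norm (h v) + norm (h' v)) ` {a..b})"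
    by (intro compact_imp_bounded compact_continuous_image) auto
  then obtain K where K: "\<And>v. v \<in> {a..b} \<Longrightarrow> norm (h v) + norm (h' v) \<le> K"
    unfolding bounded_iff by fastforce
  have "0 \<le> norm (h a) + norm (h' a)" by simp
  also have "\<dots> \<le> K" using K \<open>a \<le> b\<close> by simp
  finally have K0: "K \<ge> 0" .
  show ?thesis
  proof (rule that[of "(2 + (b - a)) * K"])
    fix t :: real assume t: "t > 0"
    define G where "G v = h v * of_real (sin (t * v) / t)" for v
    define D where "D v = h' v * of_real (sin (t * v) / t)" for v
    text \<open>Integration by parts: \<open>G' = h cos + D\<close>, and both \<open>G\<close> and \<open>D\<close> are \<open>O(1/t)\<close>.\<close>
    have ftc: "((\<lambda>v. h v * of_real (cos (t * v)) + D v) has_integral (G b - G a)) {a..b}"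
    proof (rule fundamental_theorem_of_calculus[OF \<open>a \<le> b\<close>])
      fix v assume v: "v \<in> {a..b}"
      have "((\<lambda>v. complex_of_real (sin (t * v) / t)) has_vector_derivative of_real (cos (t * v)))
              (at v within {a..b})"
        using t by (auto intro!: derivative_eq_intros)
      from has_vector_derivative_mult[OF h'[OF v] this]
      show "(G has_vector_derivative h v * of_real (cos (t * v)) + D v) (at v within {a..b})"
        unfolding G_def D_def by (simp add: algebra_simps)
    qed
    have cont_D: "continuous_on {a..b} D"
      unfolding D_def using t by (intro continuous_intros cont) auto
    have "((\<lambda>v. h v * of_real (cos (t * v)) + D v - D v) has_integral (G b - G a - integral {a..b} D)) {a..b}"
      using ftc integrable_integral[OF integrable_continuous_interval[OF cont_D]]
      by (rule has_integral_diff)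
    then have parts: "integral {a..b} (\<lambda>v. h v * of_real (cos (t * v))) = G b - G a - integral {a..b} D"
      by (simp add: integral_unique)
    have bound: "norm (G v) \<le> K / t" "norm (D v) \<le> K / t" if "v \<in> {a..b}" for v
    proof -
      have s: "\<bar>sin (t * v) / t\<bar> \<le> 1 / t"
        using t abs_sin_le_one by (simp add: divide_right_mono)
      have "norm (h v) \<le> K" "norm (h' v) \<le> K"
        using K[OF that] norm_ge_zero[of "h v"] norm_ge_zero[of "h' v"] by linarith+
      then have "norm (h v) * \<bar>sin (t * v) / t\<bar> \<le> K * (1 / t)"
        "norm (h' v) * \<bar>sin (t * v) / t\<bar> \<le> K * (1 / t)"
        using K0 s by (intro mult_mono; simp)+
      then show "norm (G v) \<le> K / t" "norm (D v) \<le> K / t"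
        unfolding G_def D_def norm_mult norm_of_real by simp_all
    qed
    have "norm (integral {a..b} (\<lambda>v. h v * of_real (cos (t * v))))
        \<le> norm (G b) + norm (G a) + norm (integral {a..b} D)"
      unfolding parts
      using norm_triangle_ineq4[of "G b" "G a"] norm_triangle_ineq4[of "G b - G a" "integral {a..b} D"]
      by linarith
    also have "\<dots> \<le> K / t + K / t + K / t * (b - a)"
      using bound \<open>a \<le> b\<close> by (intro add_mono integral_bound[OF \<open>a \<le> b\<close> cont_D]) auto
    also have "\<dots> = (2 + (b - a)) * K / t"
      using t by (simp add: field_simps)
    finally show "norm (integral {a..b} (\<lambda>v. h v * of_real (cos (t * v)))) \<le> (2 + (b - a)) * K / t" .
  qed
qed

lemma integrable_mult_cos:
  fixes h :: "real \<Rightarrow> complex"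
  assumes "h absolutely_integrable_on {a..b}"
  shows "(\<lambda>v. h v * of_real (cos (t * v))) integrable_on {a..b}"
proof (rule measurable_bounded_by_integrable_imp_integrable)
  have "(\<lambda>v. complex_of_real (cos (t * v))) \<in> borel_measurable (lebesgue_on {a..b})"
    by (intro continuous_imp_measurable_on_sets_lebesgue continuous_intros) auto
  with absolutely_integrable_measurable[of "{a..b}"] assms
  show "(\<lambda>v. h v * of_real (cos (t * v))) \<in> borel_measurable (lebesgue_on {a..b})"
    by (intro borel_measurable_times) auto
  show "(\<lambda>v. norm (h v)) integrable_on {a..b}"
    using assms by (simp add: absolutely_integrable_on_def)
  show "norm (h v * of_real (cos (t * v))) \<le> norm (h v)" for v
    unfolding norm_mult norm_of_real by (simp add: abs_cos_le_one mult_left_le)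
qed auto

lemma integral_combine3:
  fixes f :: "real \<Rightarrow> 'a::banach"
  assumes "a \<le> c" "c \<le> d" "d \<le> b" "f integrable_on {a..b}"
  shows "integral {a..b} f = integral {a..c} f + integral {c..d} f + integral {d..b} f"
proof -
  have "integral {a..c} f + integral {c..b} f = integral {a..b} f"
    using assms by (intro Henstock_Kurzweil_Integration.integral_combine) auto
  moreover have "integral {c..d} f + integral {d..b} f = integral {c..b} f"
    using assms integrable_on_subinterval[OF assms(4), of c b]
    by (intro Henstock_Kurzweil_Integration.integral_combine) auto
  ultimately show ?thesis by (metis add.assoc)
qed

lemma integral_end_intervals_small:
  fixes N :: "real \<Rightarrow> real"
  assumes "N integrable_on {a..b}" "a < b" "e > 0"
  obtains \<delta> where "0 < \<delta>" "a + \<delta> \<le> b - \<delta>"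
    "integral {a..a + \<delta>} N < e" "integral {b - \<delta>..b} N < e"
proof -
  obtain d1 where d1: "d1 > 0" "\<And>x. x \<in> {a..b} \<Longrightarrow> dist x a < d1 \<Longrightarrow>
       dist (integral {a..x} N) (integral {a..a} N) < e"
    using indefinite_integral_continuous_1[OF assms(1)] assms unfolding continuous_on_iff
    by (metis atLeastAtMost_iff order_refl less_imp_le)
  obtain d2 where d2: "d2 > 0" "\<And>x. x \<in> {a..b} \<Longrightarrow> dist x b < d2 \<Longrightarrow>
       dist (integral {x..b} N) (integral {b..b} N) < e"
    using indefinite_integral_continuous_1'[OF assms(1)] assms unfolding continuous_on_iff
    by (metis atLeastAtMost_iff order_refl less_imp_le)
  define \<delta> where "\<delta> = min (min d1 d2) (b - a) / 4"
  have "0 < min (min d1 d2) (b - a)" using d1 d2 \<open>a < b\<close> by simp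
  moreover have "min (min d1 d2) (b - a) \<le> d1" "min (min d1 d2) (b - a) \<le> d2"
    "min (min d1 d2) (b - a) \<le> b - a" by simp_all
  ultimately have \<delta>: "0 < \<delta>" "\<delta> < d1" "\<delta> < d2" "a + \<delta> \<le> b - \<delta>"
    unfolding \<delta>_def by linarith+
  have "dist (integral {a..a + \<delta>} N) (integral {a..a} N) < e"
    using \<delta> by (intro d1(2)) (auto simp: dist_real_def)
  moreover have "dist (integral {b - \<delta>..b} N) (integral {b..b} N) < e"
    using \<delta> by (intro d2(2)) (auto simp: dist_real_def)
  ultimately show ?thesis
    using \<delta> by (intro that[of \<delta>]) (simp_all add: dist_real_def)
qed

lemma Riemann_Lebesgue_cos:
  fixes h h' :: "real \<Rightarrow> complex"
  assumes "a < b"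
    and int: "h absolutely_integrable_on {a..b}"
    and h': "\<And>v. v \<in> {a<..<b} \<Longrightarrow> (h has_vector_derivative h' v) (at v)"
    and cont: "continuous_on {a<..<b} h'"
  shows "((\<lambda>t. integral {a..b} (\<lambda>v. h v * of_real (cos (t * v)))) \<longlongrightarrow> 0) at_top"
  unfolding tendsto_iff eventually_at_top_linorder
proof (intro allI impI)
  fix r :: real assume "r > 0"
  define e where "e = r / 3"
  have e: "e > 0" using \<open>r > 0\<close> by (simp add: e_def)
  have int_N: "(\<lambda>v. norm (h v)) integrable_on {a..b}"
    using int by (simp add: absolutely_integrable_on_def)
  text \<open>Near the endpoints the absolute integrability of \<open>h\<close> makes the contribution small;
    in between, integration by parts gives decay like \<open>1/t\<close>.\<close>
  obtain \<delta> where \<delta>: "0 < \<delta>" "a + \<delta> \<le> b - \<delta>"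
    and left: "integral {a..a + \<delta>} (\<lambda>v. norm (h v)) < e"
    and right: "integral {b - \<delta>..b} (\<lambda>v. norm (h v)) < e"
    using integral_end_intervals_small[OF int_N \<open>a < b\<close> e] by blast
  obtain M where M: "\<And>t. t > 0 \<Longrightarrow>
      norm (integral {a + \<delta>..b - \<delta>} (\<lambda>v. h v * of_real (cos (t * v)))) \<le> M / t"
  proof (rule norm_integral_mult_cos_le[OF \<delta>(2)])
    show "(h has_vector_derivative h' v) (at v within {a + \<delta>..b - \<delta>})"
      if "v \<in> {a + \<delta>..b - \<delta>}" for v
      using that \<delta> by (auto intro!: has_vector_derivative_at_within[OF h'])
    show "continuous_on {a + \<delta>..b - \<delta>} h'"
      using \<delta> by (intro continuous_on_subset[OF cont]) auto
  qed (rule that)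
  show "\<exists>t0. \<forall>t\<ge>t0. dist (integral {a..b} (\<lambda>v. h v * of_real (cos (t * v)))) 0 < r"
  proof (intro exI allI impI)
    fix t assume t: "t \<ge> \<bar>M\<bar> / e + 1"
    define f where "f v = h v * of_real (cos (t * v))" for v
    have "\<bar>M\<bar> / e \<ge> 0" using e by simp
    with t have "t > 0" by linarith
    have "\<bar>M\<bar> / e < t" using t by linarith
    then have "\<bar>M\<bar> < t * e" by (simp add: pos_divide_less_eq[OF e])
    then have "M / t < e"
      using \<open>t > 0\<close> abs_ge_self[of M] by (simp add: pos_divide_less_eq mult.commute)
    have int_f: "f integrable_on {a..b}"
      unfolding f_def using int by (rule integrable_mult_cos)
    have tail: "norm (integral {c..d} f) \<le> integral {c..d} (\<lambda>v. norm (h v))"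
      if "{c..d} \<subseteq> {a..b}" for c d
    proof (rule integral_norm_bound_integral)
      show "f integrable_on {c..d}" by (rule integrable_on_subinterval[OF int_f that])
      show "(\<lambda>v. norm (h v)) integrable_on {c..d}" by (rule integrable_on_subinterval[OF int_N that])
      show "norm (f v) \<le> norm (h v)" for v
        unfolding f_def norm_mult norm_of_real by (simp add: abs_cos_le_one mult_left_le)
    qed
    have ends: "a \<le> a + \<delta>" "b - \<delta> \<le> b" using \<delta>(1) by linarith+
    have "norm (integral {a..a + \<delta>} f) \<le> integral {a..a + \<delta>} (\<lambda>v. norm (h v))"
      using ends \<delta>(2) by (intro tail) auto
    moreover have "norm (integral {b - \<delta>..b} f) \<le> integral {b - \<delta>..b} (\<lambda>v. norm (h v))"
      using ends \<delta>(2) by (intro tail) auto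
    moreover have "norm (integral {a + \<delta>..b - \<delta>} f) < e"
      using M[OF \<open>t > 0\<close>] \<open>M / t < e\<close> unfolding f_def by linarith
    ultimately have "norm (integral {a..b} f) < e + e + e"
      unfolding integral_combine3[OF ends(1) \<delta>(2) ends(2) int_f]
      using left right
        norm_triangle_ineq[of "integral {a..a + \<delta>} f + integral {a + \<delta>..b - \<delta>} f"
          "integral {b - \<delta>..b} f"]
        norm_triangle_ineq[of "integral {a..a + \<delta>} f" "integral {a + \<delta>..b - \<delta>} f"]
      by linarith
    then show "dist (integral {a..b} (\<lambda>v. h v * of_real (cos (t * v)))) 0 < r"
      by (simp add: f_def [abs_def] e_def)
  qed
qed

definition cot_weight :: "complex \<Rightarrow> complex \<Rightarrow> complex" where
  "cot_weight k z = (z powr k - z) * cot (of_real pi * z)"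

lemma cot_weight_of_real:
  "cot_weight k (of_real v) = (of_real v powr k - of_real v) * of_real (cot (pi * v))"
  by (simp add: cot_weight_def cot_of_real)

lemma sin_pi_nonzero_strip:
  assumes "0 < Re z" "Re z < 1"
  shows "sin (of_real pi * z) \<noteq> 0"
proof
  assume "sin (of_real pi * z) = 0"
  then obtain n :: int where "of_real pi * z = of_real (n * pi)"
    by (auto simp: sin_eq_0)
  then have "z = of_int n" by (simp add: field_simps)
  with assms show False by auto
qed

lemma open_strip: "open {z. 0 < Re z \<and> Re z < 1}"
  by (intro open_Collect_conj open_halfspace_Re_gt open_halfspace_Re_lt)

lemma holomorphic_cot_weight: "cot_weight k holomorphic_on {z. 0 < Re z \<and> Re z < 1}"
proof -
  have "z \<notin> \<real>\<^sub>\<le>\<^sub>0" if "z \<in> {z. 0 < Re z \<and> Re z < 1}" for z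
    using that by (auto simp: complex_nonpos_Reals_iff)
  then show ?thesis
    unfolding cot_weight_def cot_def using sin_pi_nonzero_strip
    by (intro holomorphic_intros) auto
qed

lemma has_vector_derivative_cot_weight:
  assumes "v \<in> {0<..<1}"
  shows "((\<lambda>v. cot_weight k (of_real v)) has_vector_derivative deriv (cot_weight k) (of_real v)) (at v)"
  using assms
  by (intro has_vector_derivative_real_field holomorphic_derivI[OF holomorphic_cot_weight open_strip]) simp

lemma continuous_on_deriv_cot_weight:
  "continuous_on {0<..<1} (\<lambda>v. deriv (cot_weight k) (of_real v))"
  using holomorphic_on_imp_continuous_on[OF holomorphic_deriv[OF holomorphic_cot_weight open_strip]]
  by (rule continuous_on_compose2[OF _ continuous_on_of_real_id]) auto

lemma abs_cot_le_inverse: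
  assumes "0 < x" "x \<le> pi / 2"
  shows "\<bar>cot x\<bar> \<le> 1 / x"
proof (cases "x = pi / 2")
  case True
  then have "cos x = cos (pi / 2)" by (simp only:)
  then show ?thesis using assms by (simp add: cot_def)
next
  case False
  then have "x < pi / 2" using assms by auto
  then have "x \<le> tan x" "tan x > 0"
    using abs_tan_ge[of x] tan_gt_zero[of x] assms by auto
  moreover have "cot x = 1 / tan x" by (simp add: cot_def tan_def)
  ultimately show ?thesis using assms by (auto intro!: frac_le)
qed

lemma norm_cot_weight_le_near_0:
  assumes "0 < v" "v \<le> 1 / 2"
  shows "norm (cot_weight k (of_real v)) \<le> v powr (Re k - 1) + 1"
proof -
  have "norm (cot_weight k (of_real v)) \<le> (norm ((of_real v) powr k) + v) * \<bar>cot (pi * v)\<bar>"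
    unfolding cot_weight_of_real norm_mult norm_of_real using assms
    by (intro mult_right_mono order_trans[OF norm_triangle_ineq4]) auto
  also have "norm ((of_real v :: complex) powr k) = v powr Re k"
    using assms by (subst norm_powr_real_powr) auto
  also have "(v powr Re k + v) * \<bar>cot (pi * v)\<bar> \<le> (v powr Re k + v) * (1 / (pi * v))"
    using assms abs_cot_le_inverse[of "pi * v"] by (intro mult_left_mono) auto
  also have "\<dots> = (v powr (Re k - 1) + 1) / pi"
    using assms by (simp add: field_simps powr_diff)
  also have "\<dots> \<le> v powr (Re k - 1) + 1"
    using pi_gt3 mult_left_mono[of 1 pi "v powr (Re k - 1) + 1"] by (simp add: divide_le_eq)
  finally show ?thesis .
qed

lemma norm_powr_minus_id_le_near_1:
  fixes k :: complex
  obtains B where "\<And>z. z \<in> cball 1 (1 / 2) \<Longrightarrow> norm (z powr k - z) \<le> B * norm (z - 1)"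
proof -
  define S where "S = cball (1 :: complex) (1 / 2)"
  define f' where "f' z = k * z powr (k - 1) - 1" for z
  have S: "z \<notin> \<real>\<^sub>\<le>\<^sub>0" if "z \<in> S" for z
    using that complex_Re_le_cmod[of "1 - z"]
    by (auto simp: S_def dist_norm complex_nonpos_Reals_iff)
  have "continuous_on S f'"
    unfolding f'_def using S by (intro holomorphic_on_imp_continuous_on holomorphic_intros) auto
  then have "bounded (f' ` S)"
    by (intro compact_imp_bounded compact_continuous_image) (auto simp: S_def)
  then obtain B where B: "\<And>z. z \<in> S \<Longrightarrow> norm (f' z) \<le> B"
    unfolding bounded_iff by auto
  have "norm (z powr k - z) \<le> B * norm (z - 1)" if "z \<in> S" for z
  proof -
    have "norm ((z powr k - z) - (1 powr k - 1)) \<le> B * norm (z - 1)"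
    proof (rule field_differentiable_bound[of S _ f' B])
      show "convex S" by (simp add: S_def)
      fix w assume "w \<in> S"
      then show "((\<lambda>z. z powr k - z) has_field_derivative f' w) (at w within S)"
        unfolding f'_def using S
        by (intro derivative_eq_intros has_field_derivative_at_within[OF has_field_derivative_powr]) auto
      show "norm (f' w) \<le> B" using B \<open>w \<in> S\<close> .
    qed (use that in \<open>auto simp: S_def\<close>)
    then show ?thesis by simp
  qed
  then show ?thesis
    unfolding S_def by (rule that)
qed

lemma cot_weight_bounded_near_1:
  obtains B where "\<And>v. 1 / 2 \<le> v \<Longrightarrow> v < 1 \<Longrightarrow> norm (cot_weight k (of_real v)) \<le> B"
proof -
  obtain B where B: "\<And>z. z \<in> cball 1 (1 / 2) \<Longrightarrow> norm (z powr k - z) \<le> B * norm (z - 1)"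
    using norm_powr_minus_id_le_near_1 by blast
  show ?thesis
  proof (rule that[of "B / pi"])
    fix v :: real assume v: "1 / 2 \<le> v" "v < 1"
    have dist: "norm (complex_of_real v - 1) = 1 - v"
      using v by (metis abs_of_nonneg diff_ge_0_iff_ge less_imp_le norm_minus_commute norm_of_real
          of_real_1 of_real_diff)
    then have "norm ((of_real v :: complex) powr k - of_real v) \<le> B * (1 - v)"
      using v B[of "of_real v"] by (simp add: dist_norm norm_minus_commute)
    moreover have "\<bar>cot (pi * v)\<bar> \<le> 1 / (pi * (1 - v))"
    proof -
      have "cot (pi * v) = - cot (pi * (1 - v))"
        by (simp add: cot_def right_diff_distrib)
      then show ?thesis using v by (simp, intro abs_cot_le_inverse) auto
    qed
    ultimately have "norm (cot_weight k (of_real v)) \<le> (B * (1 - v)) * (1 / (pi * (1 - v)))"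
      unfolding cot_weight_of_real norm_mult norm_of_real
      by (intro mult_mono) (auto intro: order_trans[OF norm_ge_zero])
    also have "\<dots> = B / pi" using v by (simp add: field_simps)
    finally show "norm (cot_weight k (of_real v)) \<le> B / pi" .
  qed
qed

lemma cot_weight_absolutely_integrable:
  assumes "Re k > 0"
  shows "(\<lambda>v. cot_weight k (of_real v)) absolutely_integrable_on {0..1}"
proof -
  obtain B where B: "\<And>v. 1 / 2 \<le> v \<Longrightarrow> v < 1 \<Longrightarrow> norm (cot_weight k (of_real v)) \<le> B"
    using cot_weight_bounded_near_1 by blast
  have "(\<lambda>v. cot_weight k (of_real v)) absolutely_integrable_on {0<..<1}"
  proof (rule measurable_bounded_by_integrable_imp_absolutely_integrable)
    have "continuous_on {0<..<1} (\<lambda>v. cot_weight k (of_real v))"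
      using has_vector_derivative_continuous[OF has_vector_derivative_cot_weight]
      by (blast intro: continuous_at_imp_continuous_on)
    then show "(\<lambda>v. cot_weight k (of_real v)) \<in> borel_measurable (lebesgue_on {0<..<1})"
      by (intro continuous_imp_measurable_on_sets_lebesgue) auto
    show "{0<..<1::real} \<in> sets lebesgue" by simp
    have "(\<lambda>v. v powr (Re k - 1) + (1 + \<bar>B\<bar>)) integrable_on {0..1}"
      using assms by (intro integrable_add integrable_on_powr_from_0) auto
    then show "(\<lambda>v. v powr (Re k - 1) + (1 + \<bar>B\<bar>)) integrable_on {0<..<1}"
      by (simp add: integrable_on_open_interval_real)
    fix v :: real assume v: "v \<in> {0<..<1}"
    have "norm (cot_weight k (of_real v)) \<le> 1 + \<bar>B\<bar> + v powr (Re k - 1)"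
    proof (cases "v \<le> 1 / 2")
      case True
      then show ?thesis using norm_cot_weight_le_near_0[of v k] v by auto
    next
      case False
      then show ?thesis using B[of v] v by (auto intro: add_increasing2)
    qed
    then show "norm (cot_weight k (of_real v)) \<le> v powr (Re k - 1) + (1 + \<bar>B\<bar>)"
      by simp
  qed
  then show ?thesis by (simp add: absolutely_integrable_on_Icc_iff_Ioo)
qed

lemma tendsto_integral_cot_weight_mult_cos:
  assumes "Re k > 0"
  shows "(\<lambda>n. integral {0..1} (\<lambda>v. cot_weight k (of_real v) * of_real (cos (2 * pi * real n * v))))
           \<longlonglongrightarrow> 0"
proof -
  have "((\<lambda>t. integral {0..1} (\<lambda>v. cot_weight k (of_real v) * of_real (cos (t * v)))) \<longlongrightarrow> 0) at_top"
    using cot_weight_absolutely_integrable[OF assms] has_vector_derivative_cot_weight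
      continuous_on_deriv_cot_weight
    by (rule Riemann_Lebesgue_cos[OF zero_less_one])
  moreover have "filterlim (\<lambda>n. 2 * pi * real n) at_top sequentially"
    by (intro filterlim_tendsto_pos_mult_at_top[OF tendsto_const] filterlim_real_sequentially) simp
  ultimately show ?thesis
    by (rule filterlim_compose)
qed

lemma integral_reflect_01:
  fixes g :: "real \<Rightarrow> 'a::banach"
  shows "integral {0..1} (\<lambda>u. g (1 - u)) = integral {0..1} g"
proof -
  have "integral {0..1} (\<lambda>u. g (1 - u)) = integral {- 0..- (- 1)} (\<lambda>u. (g \<circ> (+) 1) (- u))"
    by (simp add: o_def)
  also have "\<dots> = integral {- 1..0} (g \<circ> (+) 1)"
    by (rule Henstock_Kurzweil_Integration.integral_reflect_real)
  also have "\<dots> = integral {- 1 + 1..0 + 1} g"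
    by (rule integral_shift_Icc_real)
  finally show ?thesis by simp
qed

lemma integral_reflected_powr_cot_kernel:
  assumes "Re k > 0"
  shows "integral {0..1} (\<lambda>u. of_real (1 - u) powr k * of_real (cot_kernel n u))
       = integral {0..1} (\<lambda>v. cot_weight k (of_real v) * of_real (cos (2 * pi * real n * v)))
         - integral {0..1} (\<lambda>v. cot_weight k (of_real v))
         - of_real ((inverse (2 * real n) - harm n) / pi)"
    (is "_ = ?J - ?B - of_real ?T")
proof -
  have "((\<lambda>v. cot_weight k (of_real v)) has_integral ?B) {0<..<1}"
    using cot_weight_absolutely_integrable[OF assms]
    by (simp add: has_integral_Icc_iff_Ioo[symmetric] absolutely_integrable_on_def integrable_integral)
  moreover have "((\<lambda>v. cot_weight k (of_real v) * of_real (cos (2 * pi * real n * v))) has_integral ?J)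
      {0<..<1}"
    using integrable_mult_cos[OF cot_weight_absolutely_integrable[OF assms]]
    by (simp add: has_integral_Icc_iff_Ioo[symmetric] integrable_integral)
  moreover have "((\<lambda>v. complex_of_real (v * cot_kernel n v)) has_integral of_real ?T) {0<..<1}"
    by (intro has_integral_of_real has_integral_mult_cot_kernel)
  ultimately have "((\<lambda>v. cot_weight k (of_real v) * of_real (cos (2 * pi * real n * v))
        - cot_weight k (of_real v) - complex_of_real (v * cot_kernel n v)) has_integral ?J - ?B - of_real ?T)
      {0<..<1}"
    by (intro has_integral_diff)
  moreover have "cot_weight k (of_real v) * of_real (cos (2 * pi * real n * v))
        - cot_weight k (of_real v) - complex_of_real (v * cot_kernel n v)
      = of_real v powr k * of_real (cot_kernel n (1 - v))" for v
    unfolding cot_kernel_reflect cot_weight_of_real by (simp add: cot_kernel_def algebra_simps)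
  ultimately have "((\<lambda>v. of_real v powr k * of_real (cot_kernel n (1 - v))) has_integral ?J - ?B - of_real ?T)
      {0..1}"
    by (simp add: has_integral_Icc_iff_Ioo)
  then show ?thesis
    using integral_reflect_01[of "\<lambda>v. of_real v powr k * of_real (cot_kernel n (1 - v))"]
    by (simp add: integral_unique)
qed

lemma harm_ln_asymptotics:
  "(\<lambda>n. (inverse (2 * real n) - harm n) / pi + (euler_mascheroni + ln (real n)) / pi) \<longlonglongrightarrow> 0"
proof -
  have "(\<lambda>n. (inverse (real n) / 2 - (harm n - ln (real n) - euler_mascheroni)) / pi)
      \<longlonglongrightarrow> (0 / 2 - (euler_mascheroni - euler_mascheroni)) / pi"
    by (intro tendsto_intros euler_mascheroni_LIMSEQ lim_inverse_n) simp_all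
  moreover have "(\<lambda>n. (inverse (2 * real n) - harm n) / pi + (euler_mascheroni + ln (real n)) / pi)
      = (\<lambda>n. (inverse (real n) / 2 - (harm n - ln (real n) - euler_mascheroni)) / pi)"
    by (simp add: fun_eq_iff add_divide_distrib diff_divide_distrib)
  ultimately show ?thesis by simp
qed

theorem mainTheorem5:
  fixes k :: complex
  assumes "Re k > 0"
  shows "(\<lambda>n::nat.
            integral {0..1} (\<lambda>u::real. (of_real (1 - u)) powr k
                 * of_real ((1 - cos (2 * pi * real n * u)) * cot (pi * u)))
          - (of_real ((euler_mascheroni + ln (real n)) / pi)
             - integral {0..1} (\<lambda>u::real. ((of_real u) powr k - of_real u) * of_real (cot (pi * u)))))
         \<longlonglongrightarrow> 0"
proof -
  define J where "J n = integral {0..1} (\<lambda>v. cot_weight k (of_real v) * of_real (cos (2 * pi * real n * v)))"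
    for n
  define B where "B = integral {0..1} (\<lambda>v. cot_weight k (of_real v))"
  define E where "E n = (inverse (2 * real n) - harm n) / pi + (euler_mascheroni + ln (real n)) / pi" for n
  have "(\<lambda>n. J n - of_real (E n)) \<longlonglongrightarrow> 0 - of_real 0"
    unfolding J_def E_def
    by (intro tendsto_intros tendsto_integral_cot_weight_mult_cos[OF assms] harm_ln_asymptotics)
  moreover have "integral {0..1} (\<lambda>u. of_real (1 - u) powr k
                 * of_real ((1 - cos (2 * pi * real n * u)) * cot (pi * u)))
          - (of_real ((euler_mascheroni + ln (real n)) / pi)
             - integral {0..1} (\<lambda>u. ((of_real u) powr k - of_real u) * of_real (cot (pi * u))))
      = J n - of_real (E n)" for n
  proof -
    have "integral {0..1} (\<lambda>u. ((of_real u) powr k - of_real u) * of_real (cot (pi * u))) = B"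
      by (simp only: B_def cot_weight_of_real)
    with integral_reflected_powr_cot_kernel[OF assms, of n] show ?thesis
      unfolding cot_kernel_def J_def [symmetric] B_def [symmetric] E_def by simp
  qed
  ultimately show ?thesis by simp
qed

end
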